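(* Let $n\ge1$, $\boldsymbol\mu\in\mathcal S_n^\uparrow$, $\boldsymbol\xi\in\mathbb R^n$, $\mathbf y=\boldsymbol\mu+\boldsymbol\xi$ and $\hat{\boldsymbol\mu}=\Pi_{\mathcal S_n^\uparrow}(\mathbf y)$. Let $(\hat T_1,\dots,\hat T_{\hat k})$, $\hat k=k(\hat{\boldsymbol\mu})$, be the partition of $\{1,\dots,n\}$ into the maximal sets of consecutive indices on which $\hat{\boldsymbol\mu}$ is constant. Then $$\|\hat{\boldsymbol\mu}-\boldsymbol\mu\|_2^2\le\sum_{j=1}^{\hat k}\big\|\Pi_{\mathcal S^\downarrow_{|\hat T_j|}}(\boldsymbol\xi_{\hat T_j})\big\|_2^2 .$$
   Context: $\mathcal S_m^\uparrow=\{\mathbf u\in\mathbb R^m:u_1\le\dots\le u_m\}$, $\mathcal S_m^\downarrow=-\mathcal S_m^\uparrow$ (nonincreasing sequences), with $\mathcal S_1^\uparrow=\mathbb R$. $\Pi_K$ is the Euclidean projection onto $K$. For $T=\{t_1<\dots<t_{|T|}\}$, $\boldsymbol\xi_T=(\xi_{t_1},\dots,\xi_{t_{|T|}})^T$. $k(\mathbf u)$ is the number of distinct coordinates of $\mathbf u$. *)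

theory Defs
  imports Complex_Main
begin

text \<open>Vectors in R^m are represented as real lists of length m (index i ranges over 0..<m).\<close>

definition sq_norm :: "real list \<Rightarrow> real" where
  "sq_norm v = sum_list (map (\<lambda>x. x ^ 2) v)"

definition vdiff :: "real list \<Rightarrow> real list \<Rightarrow> real list" where
  "vdiff u v = map2 (-) u v"

definition vadd :: "real list \<Rightarrow> real list \<Rightarrow> real list" where
  "vadd u v = map2 (+) u v"

definition S_up :: "nat \<Rightarrow> real list set" where
  "S_up m = {u. length u = m \<and> sorted u}"

definition S_down :: "nat \<Rightarrow> real list set" where
  "S_down m = {u. length u = m \<and> sorted_wrt (\<ge>) u}"

definition proj :: "real list set \<Rightarrow> real list \<Rightarrow> real list" where
  "proj K y = (THE p. p \<in> K \<and> (\<forall>q\<in>K. sq_norm (vdiff y p) \<le> sq_norm (vdiff y q)))"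

definition subvec :: "real list \<Rightarrow> nat set \<Rightarrow> real list" where
  "subvec xi T = map (nth xi) (sorted_list_of_set T)"

definition const_blocks :: "real list \<Rightarrow> nat set set" where
  "const_blocks u = {{a..<b} | a b. a < b \<and> b \<le> length u
      \<and> (\<forall>i\<in>{a..<b}. u ! i = u ! a)
      \<and> (a = 0 \<or> u ! (a - 1) \<noteq> u ! a)
      \<and> (b = length u \<or> u ! b \<noteq> u ! a)}"

end

theory Submission
  imports Defs "HOL-Analysis.Analysis"
begin

text \<open>On a constant block \<open>T\<close> of the isotonic fit, with value \<open>c\<close>, optimality of the fit
  under the perturbations that lower an initial segment of \<open>T\<close> or raise all of \<open>T\<close> says
  that the partial sums of \<open>y - c\<close> over initial segments of \<open>T\<close> are nonnegative and that
  their total vanishes. Abel summation against the nondecreasing \<open>\<mu>\<^sub>T\<close> then gives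
  \<open>\<langle>\<xi>\<^sub>T, v\<rangle> \<ge> \<parallel>v\<parallel>\<^sup>2\<close> for the nonincreasing vector \<open>v = c - \<mu>\<^sub>T\<close>. The projection
  \<open>q\<close> of \<open>\<xi>\<^sub>T\<close> onto the cone of nonincreasing sequences satisfies
  \<open>\<langle>\<xi>\<^sub>T - q, v\<rangle> \<le> 0\<close>, hence \<open>\<parallel>v\<parallel>\<^sup>2 \<le> \<langle>q, v\<rangle>\<close> and so \<open>\<parallel>v\<parallel>\<^sup>2 \<le> \<parallel>q\<parallel>\<^sup>2\<close>.\<close>

section \<open>Nearest points and first-order optimality\<close>

lemma sq_norm_conv_sum: "sq_norm u = (\<Sum>i<length u. (u!i)^2)"
  unfolding sq_norm_def by (simp add: sum_list_sum_nth atLeast0LessThan)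

lemma sq_norm_vdiff:
  assumes "length u = m" "length v = m"
  shows "sq_norm (vdiff u v) = (\<Sum>i<m. (u!i - v!i)^2)"
  using assms unfolding vdiff_def by (simp add: sq_norm_conv_sum)

definition is_proj :: "real list set \<Rightarrow> real list \<Rightarrow> real list \<Rightarrow> bool" where
  "is_proj K y p \<longleftrightarrow> p \<in> K \<and> (\<forall>q\<in>K. sq_norm (vdiff y p) \<le> sq_norm (vdiff y q))"

lemma le_0_if_le_linear_near_0:
  fixes a c d :: real
  assumes "d > 0" and le: "\<And>t. 0 < t \<Longrightarrow> t \<le> d \<Longrightarrow> a \<le> c * t"
  shows "a \<le> 0"
proof (rule ccontr)
  assume "\<not> a \<le> 0"
  define t where "t = min d (a / (\<bar>c\<bar> + 1))"
  have "0 < t" using \<open>d > 0\<close> \<open>\<not> a \<le> 0\<close> by (simp add: t_def)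
  have "c * t \<le> \<bar>c\<bar> * (a / (\<bar>c\<bar> + 1))"
  proof -
    have "c * t \<le> \<bar>c\<bar> * t" using \<open>0 < t\<close> by (simp add: mult_right_mono)
    also have "\<dots> \<le> \<bar>c\<bar> * (a / (\<bar>c\<bar> + 1))"
      by (intro mult_left_mono) (auto simp: t_def)
    finally show ?thesis .
  qed
  also have "\<dots> < a"
    using \<open>\<not> a \<le> 0\<close> by (simp add: field_simps)
  finally show False using le[of t] \<open>0 < t\<close> by (simp add: t_def)
qed

lemma is_proj_first_order:
  fixes w :: "nat \<Rightarrow> real"
  assumes p: "is_proj K y p" and "length y = n" "length p = n" "d > 0"
    and K: "\<And>t. 0 < t \<Longrightarrow> t \<le> d \<Longrightarrow> map (\<lambda>i. p!i + t * w i) [0..<n] \<in> K"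
  shows "(\<Sum>i<n. (y!i - p!i) * w i) \<le> 0"
proof (rule le_0_if_le_linear_near_0[OF \<open>d > 0\<close>])
  fix t :: real assume "0 < t" "t \<le> d"
  have "(\<Sum>i<n. (y!i - p!i)^2) \<le> (\<Sum>i<n. (y!i - (p!i + t * w i))^2)"
    using p K[OF \<open>0 < t\<close> \<open>t \<le> d\<close>] assms(2,3) by (auto simp: is_proj_def sq_norm_vdiff)
  also have "\<dots> = (\<Sum>i<n. (y!i - p!i)^2) - 2 * t * (\<Sum>i<n. (y!i - p!i) * w i)
      + t^2 * (\<Sum>i<n. (w i)^2)"
    by (simp add: power2_eq_square algebra_simps sum.distrib sum_subtractf sum_distrib_left)
  finally show "(\<Sum>i<n. (y!i - p!i) * w i) \<le> (\<Sum>i<n. (w i)^2) / 2 * t"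
    using \<open>0 < t\<close> by (simp add: power2_eq_square field_simps)
qed

lemma is_proj_unique:
  assumes len: "\<And>u. u \<in> K \<Longrightarrow> length u = n"
    and convex: "\<And>p q t. p \<in> K \<Longrightarrow> q \<in> K \<Longrightarrow> 0 < t \<Longrightarrow> t \<le> 1
      \<Longrightarrow> map (\<lambda>i. p!i + t * (q!i - p!i)) [0..<n] \<in> K"
    and "length y = n" and p: "is_proj K y p" and q: "is_proj K y q"
  shows "p = q"
proof -
  have "p \<in> K" "q \<in> K" using p q by (auto simp: is_proj_def)
  then have lp: "length p = n" and lq: "length q = n" by (auto intro: len)
  have "(\<Sum>i<n. (y!i - p!i) * (q!i - p!i)) \<le> 0"
    by (rule is_proj_first_order[OF p \<open>length y = n\<close> lp zero_less_one convex[OF \<open>p \<in> K\<close> \<open>q \<in> K\<close>]])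
  moreover have "(\<Sum>i<n. (y!i - q!i) * (p!i - q!i)) \<le> 0"
    by (rule is_proj_first_order[OF q \<open>length y = n\<close> lq zero_less_one convex[OF \<open>q \<in> K\<close> \<open>p \<in> K\<close>]])
  moreover have "(\<Sum>i<n. (y!i - p!i) * (q!i - p!i)) + (\<Sum>i<n. (y!i - q!i) * (p!i - q!i))
      = (\<Sum>i<n. (p!i - q!i)^2)"
    unfolding sum.distrib[symmetric] by (intro sum.cong) (auto simp: power2_eq_square algebra_simps)
  ultimately have "(\<Sum>i<n. (p!i - q!i)^2) \<le> 0" by linarith
  then have "\<forall>i\<in>{..<n}. (p!i - q!i)^2 = 0"
    using sum_nonneg_eq_0_iff[of "{..<n}" "\<lambda>i. (p!i - q!i)^2"]
    by (simp add: order_antisym sum_nonneg)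
  then show "p = q" using lp lq by (auto intro: nth_equalityI)
qed

lemma is_proj_proj:
  assumes "\<exists>p. is_proj K y p" and "\<And>p q. is_proj K y p \<Longrightarrow> is_proj K y q \<Longrightarrow> p = q"
  shows "is_proj K y (proj K y)"
  using theI'[of "is_proj K y"] assms unfolding proj_def is_proj_def[symmetric] by blast

section \<open>Projections onto the monotone cones\<close>

lemma S_up_convex:
  assumes "p \<in> S_up n" "q \<in> S_up n" "0 < t" "t \<le> 1"
  shows "map (\<lambda>i. p!i + t * (q!i - p!i)) [0..<n] \<in> S_up n"
proof -
  have "(1 - t) * p!i + t * q!i \<le> (1 - t) * p!j + t * q!j" if "i \<le> j" "j < n" for i j
    using assms that by (intro add_mono mult_left_mono) (auto simp: S_up_def sorted_nth_mono)
  then show ?thesis by (auto simp: S_up_def sorted_iff_nth_mono algebra_simps)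
qed

lemma S_down_convex:
  assumes "p \<in> S_down n" "q \<in> S_down n" "0 < t" "t \<le> 1"
  shows "map (\<lambda>i. p!i + t * (q!i - p!i)) [0..<n] \<in> S_down n"
proof -
  have "(1 - t) * p!j + t * q!j \<le> (1 - t) * p!i + t * q!i" if "i < j" "j < n" for i j
    using assms that by (intro add_mono mult_left_mono) (auto simp: S_down_def sorted_wrt_iff_nth_less)
  then show ?thesis by (auto simp: S_down_def sorted_wrt_iff_nth_less algebra_simps)
qed

lemma uminus_in_S_up_iff: "map uminus u \<in> S_up m \<longleftrightarrow> u \<in> S_down m"
  by (auto simp: S_up_def S_down_def sorted_iff_nth_mono sorted_wrt_iff_nth_less)

lemma sq_norm_vdiff_uminus: "sq_norm (vdiff (map uminus x) (map uminus p)) = sq_norm (vdiff x p)"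
  unfolding sq_norm_def vdiff_def
  by (induction x arbitrary: p) (auto simp: zip_Cons1 power2_eq_square algebra_simps split: list.splits)

text \<open>Clamping to the range of \<open>y\<close> keeps a sequence sorted and moves it closer to \<open>y\<close>, so it
  suffices to minimise over sorted sequences with values in that range, a compact set.\<close>
lemma is_proj_S_up_exists:
  assumes "length y = m"
  shows "\<exists>p. is_proj (S_up m) y p"
proof (cases "m = 0")
  case True
  then show ?thesis using assms by (auto simp: is_proj_def S_up_def sq_norm_def vdiff_def)
next
  case False
  define a where "a = Min (set y)"
  define b where "b = Max (set y)"
  have y_range: "y!i \<in> {a..b}" if "i < m" for i
    using that assms False unfolding a_def b_def by auto
  then have "a \<le> b" using False by fastforce
  define X where "X = product_topology (\<lambda>_. euclideanreal) {..<m}"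
  define Mono where "Mono = {f \<in> topspace X. \<forall>i. Suc i < m \<longrightarrow> f i \<le> f (Suc i)}"
  define Box where "Box = PiE {..<m} (\<lambda>_. {a..b})"
  define F where "F = (\<lambda>f::nat\<Rightarrow>real. \<Sum>i<m. (y!i - f i)^2)"
  have coord: "continuous_map X euclideanreal (\<lambda>f. f i)" if "i < m" for i
    unfolding X_def using continuous_map_product_projection[of i "{..<m}" "\<lambda>_. euclideanreal"] that by simp
  have "closedin X {f \<in> topspace X. f i - f (Suc i) \<in> {..0}}" if "Suc i < m" for i
    using that by (intro closedin_continuous_map_preimage[where Y=euclideanreal] continuous_map_diff coord) auto
  then have "closedin X (\<Inter>(insert (topspace X) ((\<lambda>i. {f \<in> topspace X. f i - f (Suc i) \<in> {..0}}) ` {i. Suc i < m})))"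
    by (intro closedin_Inter) auto
  moreover have "\<Inter>(insert (topspace X) ((\<lambda>i. {f \<in> topspace X. f i - f (Suc i) \<in> {..0}}) ` {i. Suc i < m})) = Mono"
    by (auto simp: Mono_def)
  ultimately have "closedin X Mono" by simp
  moreover have "compactin X Box" unfolding X_def Box_def by (simp add: compactin_PiE)
  ultimately have "compactin X (Box \<inter> Mono)" by (rule compact_Int_closedin[rotated])
  moreover have "continuous_map X euclideanreal F" unfolding F_def
    by (intro continuous_map_sum continuous_map_real_pow continuous_map_diff coord) auto
  ultimately have "compact (F ` (Box \<inter> Mono))"
    using image_compactin by (fastforce simp: compactin_euclidean_iff)
  have mem: "restrict g {..<m} \<in> Box \<inter> Mono"
    if "\<And>i. i < m \<Longrightarrow> g i \<in> {a..b}" "\<And>i. Suc i < m \<Longrightarrow> g i \<le> g (Suc i)" for g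
    using that by (auto simp: Box_def Mono_def X_def)
  have "restrict (\<lambda>_. a) {..<m} \<in> Box \<inter> Mono" using \<open>a \<le> b\<close> by (intro mem) auto
  then have "Box \<inter> Mono \<noteq> {}" by blast
  then obtain f where f: "f \<in> Box \<inter> Mono" "\<And>g. g \<in> Box \<inter> Mono \<Longrightarrow> F f \<le> F g"
    using compact_attains_inf[OF \<open>compact (F ` (Box \<inter> Mono))\<close>] by auto
  have "is_proj (S_up m) y (map f [0..<m])"
    unfolding is_proj_def
  proof (intro conjI ballI)
    show "map f [0..<m] \<in> S_up m" using f(1) by (auto simp: Mono_def S_up_def sorted_iff_nth_Suc)
  next
    fix q assume q: "q \<in> S_up m"
    define g where "g = (\<lambda>i. max a (min b (q!i)))"
    have "restrict g {..<m} \<in> Box \<inter> Mono"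
      using q \<open>a \<le> b\<close> by (intro mem) (auto simp: g_def S_up_def sorted_iff_nth_Suc)
    then have "F f \<le> F (restrict g {..<m})" by (rule f(2))
    also have "\<dots> \<le> (\<Sum>i<m. (y!i - q!i)^2)" unfolding F_def
    proof (rule sum_mono)
      fix i assume i: "i \<in> {..<m}"
      then have "\<bar>y!i - g i\<bar> \<le> \<bar>y!i - q!i\<bar>" using y_range[of i] by (auto simp: g_def)
      then show "(y!i - restrict g {..<m} i)^2 \<le> (y!i - q!i)^2" using i by (simp add: abs_le_square_iff)
    qed
    finally show "sq_norm (vdiff y (map f [0..<m])) \<le> sq_norm (vdiff y q)"
      using assms q by (simp add: sq_norm_vdiff F_def S_up_def)
  qed
  then show ?thesis by blast
qed

lemma is_proj_S_up:
  assumes "length y = m"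
  shows "is_proj (S_up m) y (proj (S_up m) y)"
  using is_proj_S_up_exists[OF assms] is_proj_unique[OF _ S_up_convex assms]
  by (intro is_proj_proj) (auto simp: S_up_def)

lemma is_proj_S_down:
  assumes "length y = m"
  shows "is_proj (S_down m) y (proj (S_down m) y)"
proof (rule is_proj_proj)
  obtain p where p: "is_proj (S_up m) (map uminus y) p"
    using is_proj_S_up_exists[of "map uminus y"] assms by auto
  have "is_proj (S_down m) y (map uminus p)"
    unfolding is_proj_def
  proof (intro conjI ballI)
    show "map uminus p \<in> S_down m"
      using p by (simp add: is_proj_def uminus_in_S_up_iff[symmetric] comp_def)
  next
    fix q assume "q \<in> S_down m"
    then have "sq_norm (vdiff (map uminus y) p) \<le> sq_norm (vdiff (map uminus y) (map uminus q))"
      using p by (simp add: is_proj_def uminus_in_S_up_iff[symmetric])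
    then show "sq_norm (vdiff y (map uminus p)) \<le> sq_norm (vdiff y q)"
      using sq_norm_vdiff_uminus[of y q] sq_norm_vdiff_uminus[of "map uminus y" p] by simp
  qed
  then show "\<exists>p. is_proj (S_down m) y p" ..
qed (use is_proj_unique[OF _ S_down_convex assms] in \<open>auto simp: S_down_def\<close>)

lemma sq_norm_le_sq_norm_proj_S_down:
  assumes "length x = m" and v: "v \<in> S_down m" and "sq_norm v \<le> sum_list (map2 (*) x v)"
  shows "sq_norm v \<le> sq_norm (proj (S_down m) x)"
proof -
  define p where "p = proj (S_down m) x"
  have p: "is_proj (S_down m) x p" unfolding p_def by (rule is_proj_S_down[OF assms(1)])
  have lp: "length p = m" and lv: "length v = m"
    using p v by (auto simp: is_proj_def S_down_def)
  have "map (\<lambda>i. p!i + t * v!i) [0..<m] \<in> S_down m" if "0 < t" for t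
    using p v that by (auto simp: is_proj_def S_down_def sorted_wrt_iff_nth_less intro!: add_mono mult_left_mono)
  then have "(\<Sum>i<m. (x!i - p!i) * v!i) \<le> 0"
    by (intro is_proj_first_order[OF p \<open>length x = m\<close> lp zero_less_one])
  moreover have "sq_norm v \<le> (\<Sum>i<m. x!i * v!i)"
    using assms(3) \<open>length x = m\<close> lv by (simp add: sum_list_sum_nth atLeast0LessThan)
  moreover have "(\<Sum>i<m. (x!i - p!i) * v!i) = (\<Sum>i<m. x!i * v!i) - (\<Sum>i<m. p!i * v!i)"
    by (simp add: left_diff_distrib sum_subtractf)
  moreover have "0 \<le> (\<Sum>i<m. (p!i - v!i)^2)" by (simp add: sum_nonneg)
  moreover have "(\<Sum>i<m. (p!i - v!i)^2) = (\<Sum>i<m. (p!i)^2) - 2 * (\<Sum>i<m. p!i * v!i) + sq_norm v"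
    using lv by (simp add: sq_norm_conv_sum power2_eq_square algebra_simps sum.distrib sum_subtractf sum_distrib_left)
  ultimately have "sq_norm v \<le> (\<Sum>i<m. (p!i)^2)" by linarith
  then show ?thesis using lp by (simp add: p_def[symmetric] sq_norm_conv_sum)
qed

section \<open>Optimality conditions on a constant block\<close>

lemma S_up_shift_interval:
  assumes "p \<in> S_up n" "k \<le> n"
    and left: "0 < a \<Longrightarrow> p!(a-1) \<le> p!a + t * c" and right: "k < n \<Longrightarrow> p!(k-1) + t * c \<le> p!k"
  shows "map (\<lambda>i. p!i + t * (if i \<in> {a..<k} then c else 0)) [0..<n] \<in> S_up n"
proof -
  have sorted: "p!i \<le> p!j" if "i \<le> j" "j < n" for i j
    using assms(1) that by (simp add: S_up_def sorted_nth_mono)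
  have "p!i + t * (if i \<in> {a..<k} then c else 0) \<le> p!Suc i + t * (if Suc i \<in> {a..<k} then c else 0)"
    if i: "Suc i < n" for i
  proof -
    consider "Suc i = a" "a < k" | "Suc i = k" "a < k" | "i \<in> {a..<k} \<longleftrightarrow> Suc i \<in> {a..<k}"
      by fastforce
    then show ?thesis using left right sorted[of i "Suc i"] i by cases auto
  qed
  then show ?thesis by (simp add: S_up_def sorted_iff_nth_Suc)
qed

lemma sum_indicator_mult:
  fixes f :: "nat \<Rightarrow> 'a::comm_semiring_1"
  assumes "S \<subseteq> {..<n}"
  shows "(\<Sum>i<n. f i * (if i \<in> S then c else 0)) = c * sum f S"
proof -
  have "(\<Sum>i<n. f i * (if i \<in> S then c else 0)) = (\<Sum>i<n. if i \<in> S then c * f i else 0)"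
    by (intro sum.cong) (auto simp: mult.commute)
  also have "\<dots> = (\<Sum>i\<in>{..<n} \<inter> S. c * f i)" by (simp add: sum.inter_restrict)
  finally show ?thesis using assms by (simp add: Int_absorb1 sum_distrib_left)
qed

lemma is_proj_S_up_prefix_sum_nonneg:
  assumes p: "is_proj (S_up n) y p" and "length y = n" "a < k" "k \<le> n"
    and const: "\<forall>i\<in>{a..<k}. p!i = p!a" and left_max: "a = 0 \<or> p!(a-1) \<noteq> p!a"
  shows "0 \<le> (\<Sum>i=a..<k. y!i - p!a)"
proof -
  have pS: "p \<in> S_up n" and lp: "length p = n" using p by (auto simp: is_proj_def S_up_def)
  define d where "d = (if a = 0 then 1 else p!a - p!(a-1))"
  have mono: "p!i \<le> p!j" if "i \<le> j" "j < n" for i j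
    using pS that by (simp add: S_up_def sorted_nth_mono)
  have "d > 0"
    using left_max mono[of "a - 1" a] \<open>a < k\<close> \<open>k \<le> n\<close> by (auto simp: d_def)
  have "map (\<lambda>i. p!i + t * (if i \<in> {a..<k} then -1 else 0)) [0..<n] \<in> S_up n"
    if "0 < t" "t \<le> d" for t
    using that mono[of "k - 1" k] \<open>a < k\<close> by (intro S_up_shift_interval[OF pS \<open>k \<le> n\<close>]) (auto simp: d_def)
  then have "(\<Sum>i<n. (y!i - p!i) * (if i \<in> {a..<k} then -1 else 0)) \<le> 0"
    by (rule is_proj_first_order[OF p \<open>length y = n\<close> lp \<open>d > 0\<close>])
  moreover have "(\<Sum>i<n. (y!i - p!i) * (if i \<in> {a..<k} then -1 else 0)) = - (\<Sum>i=a..<k. y!i - p!i)"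
    using \<open>k \<le> n\<close> by (subst sum_indicator_mult) auto
  moreover have "(\<Sum>i=a..<k. y!i - p!i) = (\<Sum>i=a..<k. y!i - p!a)"
    using const by (intro sum.cong refl) (metis (no_types, lifting))
  ultimately show ?thesis by linarith
qed

lemma is_proj_S_up_block_sum_nonpos:
  assumes p: "is_proj (S_up n) y p" and "length y = n" "a < b" "b \<le> n"
    and const: "\<forall>i\<in>{a..<b}. p!i = p!a" and right_max: "b = n \<or> p!b \<noteq> p!a"
  shows "(\<Sum>i=a..<b. y!i - p!a) \<le> 0"
proof -
  have pS: "p \<in> S_up n" and lp: "length p = n" using p by (auto simp: is_proj_def S_up_def)
  define d where "d = (if b = n then 1 else p!b - p!a)"
  have mono: "p!i \<le> p!j" if "i \<le> j" "j < n" for i j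
    using pS that by (simp add: S_up_def sorted_nth_mono)
  have "b - 1 \<in> {a..<b}" using \<open>a < b\<close> by auto
  with const have last: "p!(b-1) = p!a" by blast
  have "d > 0"
    using right_max mono[of "b - 1" b] last \<open>b \<le> n\<close> by (auto simp: d_def)
  have "map (\<lambda>i. p!i + t * (if i \<in> {a..<b} then 1 else 0)) [0..<n] \<in> S_up n"
    if "0 < t" "t \<le> d" for t
    using that mono[of "a - 1" a] last \<open>a < b\<close> \<open>b \<le> n\<close>
    by (intro S_up_shift_interval[OF pS \<open>b \<le> n\<close>]) (auto simp: d_def)
  then have "(\<Sum>i<n. (y!i - p!i) * (if i \<in> {a..<b} then 1 else 0)) \<le> 0"
    by (rule is_proj_first_order[OF p \<open>length y = n\<close> lp \<open>d > 0\<close>])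
  moreover have "(\<Sum>i<n. (y!i - p!i) * (if i \<in> {a..<b} then 1 else 0)) = (\<Sum>i=a..<b. y!i - p!i)"
    using \<open>b \<le> n\<close> by (subst sum_indicator_mult) auto
  moreover have "(\<Sum>i=a..<b. y!i - p!i) = (\<Sum>i=a..<b. y!i - p!a)"
    using const by (intro sum.cong refl) (metis (no_types, lifting))
  ultimately show ?thesis by linarith
qed

lemma sum_mult_le_sum_mult_last:
  fixes z w :: "nat \<Rightarrow> real"
  assumes partial: "\<And>k. a < k \<Longrightarrow> k \<le> b \<Longrightarrow> 0 \<le> (\<Sum>i=a..<k. z i)"
    and mono: "mono_on {a..<b} w" and "a < b"
  shows "(\<Sum>i=a..<b. z i * w i) \<le> (\<Sum>i=a..<b. z i) * w (b - 1)"
proof -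
  have "k \<le> b \<Longrightarrow> (\<Sum>i=a..<k. z i * w i) \<le> (\<Sum>i=a..<k. z i) * w (k - 1)" if "Suc a \<le> k" for k
    using that
  proof (induction k rule: dec_induct)
    case base
    then show ?case by simp
  next
    case (step k)
    have "(\<Sum>i=a..<Suc k. z i * w i) = (\<Sum>i=a..<k. z i * w i) + z k * w k"
      using step.hyps by simp
    also have "\<dots> \<le> (\<Sum>i=a..<k. z i) * w (k - 1) + z k * w k"
      using step by simp
    also have "\<dots> \<le> (\<Sum>i=a..<k. z i) * w k + z k * w k"
    proof -
      have "w (k - 1) \<le> w k" using step by (intro mono_onD[OF mono]) auto
      then show ?thesis using step partial[of k] by (intro add_right_mono mult_left_mono) auto
    qed
    also have "\<dots> = (\<Sum>i=a..<Suc k. z i) * w (Suc k - 1)"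
      using step.hyps by (simp add: algebra_simps)
    finally show ?case .
  qed
  then show ?thesis using \<open>a < b\<close> by simp
qed

lemma block_sum_sq_le_inner:
  fixes mu xi :: "nat \<Rightarrow> real"
  assumes "a < b" and mono: "mono_on {a..<b} mu"
    and partial: "\<And>k. a < k \<Longrightarrow> k \<le> b \<Longrightarrow> 0 \<le> (\<Sum>i=a..<k. mu i + xi i - c)"
    and total: "(\<Sum>i=a..<b. mu i + xi i - c) = 0"
  shows "(\<Sum>i=a..<b. (c - mu i)^2) \<le> (\<Sum>i=a..<b. xi i * (c - mu i))"
proof -
  have "(\<Sum>i=a..<b. xi i * (c - mu i)) - (\<Sum>i=a..<b. (c - mu i)^2)
      = c * (\<Sum>i=a..<b. mu i + xi i - c) - (\<Sum>i=a..<b. (mu i + xi i - c) * mu i)"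
    by (simp add: sum_subtractf[symmetric] sum_distrib_left power2_eq_square algebra_simps)
  also have "\<dots> \<ge> 0"
    using sum_mult_le_sum_mult_last[OF partial mono \<open>a < b\<close>] total by simp
  finally show ?thesis by simp
qed

section \<open>Constant blocks\<close>

lemma sorted_nth_eq_between:
  assumes "sorted p" "i \<le> j" "j \<le> k" "k < length p" "p!i = p!k"
  shows "p!j = p!i"
  using assms sorted_nth_mono[of p i j] sorted_nth_mono[of p j k] by simp

lemma const_block_eq_level_set:
  assumes "sorted p" and T: "T \<in> const_blocks p"
  obtains a where "a < length p" "T = {j. j < length p \<and> p!j = p!a}"
proof -
  from T obtain a b where T_eq: "T = {a..<b}" and "a < b" "b \<le> length p"
    and const: "\<forall>i\<in>{a..<b}. p!i = p!a"
    and left_max: "a = 0 \<or> p!(a-1) \<noteq> p!a" and right_max: "b = length p \<or> p!b \<noteq> p!a"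
    unfolding const_blocks_def by blast
  have "j \<in> {a..<b}" if "j < length p" "p!j = p!a" for j
  proof (rule ccontr)
    assume "j \<notin> {a..<b}"
    then consider "j < a" | "b \<le> j" by fastforce
    then show False
    proof cases
      case 1
      then have "p!(a-1) = p!j"
        using sorted_nth_eq_between[OF \<open>sorted p\<close>, of j "a - 1" a] that \<open>a < b\<close> \<open>b \<le> length p\<close> by auto
      then show False using left_max 1 that by auto
    next
      case 2
      have "b - 1 \<in> {a..<b}" using \<open>a < b\<close> by auto
      with const have "p!(b-1) = p!a" by blast
      moreover have "p!b = p!(b-1)"
        using sorted_nth_eq_between[OF \<open>sorted p\<close>, of "b - 1" b j] that 2 \<open>p!(b-1) = p!a\<close> \<open>a < b\<close>
        by simp
      ultimately show False using right_max 2 that by auto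
    qed
  qed
  moreover have "j < length p \<and> p!j = p!a" if "j \<in> {a..<b}" for j
    using bspec[OF const that] that \<open>b \<le> length p\<close> by auto
  ultimately have "T = {j. j < length p \<and> p!j = p!a}"
    unfolding T_eq by blast
  with \<open>a < b\<close> \<open>b \<le> length p\<close> show ?thesis by (intro that[of a]) auto
qed

lemma level_set_in_const_blocks:
  assumes "sorted p" "i < length p"
  shows "{j. j < length p \<and> p!j = p!i} \<in> const_blocks p"
proof -
  define L where "L = {j. j < length p \<and> p!j = p!i}"
  have "finite L" "i \<in> L" using assms by (auto simp: L_def)
  define a where "a = Min L"
  define b where "b = Suc (Max L)"
  have "a \<in> L" "b - 1 \<in> L" "a \<le> i" "i < b"
    using \<open>finite L\<close> \<open>i \<in> L\<close> by (auto simp: a_def b_def le_imp_less_Suc intro: Min_in Max_in)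
  then have ends: "p!a = p!i" "p!(b-1) = p!i" "b \<le> length p" by (auto simp: L_def)
  have L_eq: "L = {a..<b}"
  proof
    show "L \<subseteq> {a..<b}" using \<open>finite L\<close> by (auto simp: a_def b_def less_Suc_eq_le)
    show "{a..<b} \<subseteq> L"
      using sorted_nth_eq_between[OF \<open>sorted p\<close>, of a _ "b - 1"] ends by (auto simp: L_def)
  qed
  have const: "\<forall>j\<in>{a..<b}. p!j = p!a" using ends L_eq by (auto simp: L_def)
  have "p!(a-1) \<noteq> p!a" if "a \<noteq> 0"
  proof -
    have "a - 1 \<notin> L" using \<open>finite L\<close> that by (auto simp: a_def dest: Min_le)
    then show ?thesis using ends that \<open>a \<le> i\<close> \<open>i < b\<close> by (simp add: L_def)
  qed
  moreover have "p!b \<noteq> p!a" if "b \<noteq> length p"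
  proof -
    have "b \<notin> L" using \<open>finite L\<close> by (auto simp: b_def dest: Max_ge)
    then show ?thesis using ends that by (simp add: L_def)
  qed
  moreover have "a < b" using \<open>a \<le> i\<close> \<open>i < b\<close> by simp
  ultimately show ?thesis
    unfolding const_blocks_def L_def[symmetric] L_eq using ends(3) const
    by (intro CollectI exI[of _ a] exI[of _ b]) blast
qed

lemma sum_over_const_blocks:
  assumes "sorted p"
  shows "(\<Sum>i<length p. f i) = (\<Sum>T\<in>const_blocks p. sum f T)"
proof -
  define level where "level v = {j. j < length p \<and> p!j = v}" for v
  have blocks: "const_blocks p = level ` set p"
  proof
    show "const_blocks p \<subseteq> level ` set p"
      by (auto simp: level_def elim!: const_block_eq_level_set[OF assms])
    show "level ` set p \<subseteq> const_blocks p"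
      using level_set_in_const_blocks[OF assms] by (auto simp: level_def in_set_conv_nth)
  qed
  have "inj_on level (set p)"
    by (rule inj_onI) (auto simp: level_def in_set_conv_nth)
  have "(\<Sum>i<length p. f i) = (\<Sum>v\<in>(!) p ` {..<length p}. sum f {j \<in> {..<length p}. p!j = v})"
    by (rule sum.image_gen) simp
  also have "(!) p ` {..<length p} = set p" by (auto simp: in_set_conv_nth)
  also have "(\<Sum>v\<in>set p. sum f {j \<in> {..<length p}. p!j = v}) = (\<Sum>v\<in>set p. sum f (level v))"
    by (simp add: level_def)
  also have "\<dots> = (\<Sum>T\<in>const_blocks p. sum f T)"
    by (simp add: blocks sum.reindex[OF \<open>inj_on level (set p)\<close>])
  finally show ?thesis .
qed

lemma const_block_error_le:
  assumes p: "is_proj (S_up n) y p" and "length y = n"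
    and mu: "mu \<in> S_up n" and "length xi = n" and y: "y = vadd mu xi"
    and T: "T \<in> const_blocks p"
  shows "(\<Sum>i\<in>T. (p!i - mu!i)^2) \<le> sq_norm (proj (S_down (card T)) (subvec xi T))"
proof -
  have "length p = n" using p by (simp add: is_proj_def S_up_def)
  from T obtain a b where T_eq: "T = {a..<b}" and "a < b" "b \<le> n"
    and const: "\<forall>i\<in>{a..<b}. p!i = p!a"
    and left_max: "a = 0 \<or> p!(a-1) \<noteq> p!a" and right_max: "b = n \<or> p!b \<noteq> p!a"
    unfolding const_blocks_def \<open>length p = n\<close> by blast
  define c where "c = p!a"
  have y_nth: "y!i = mu!i + xi!i" if "i < n" for i
    using that mu \<open>length xi = n\<close> by (simp add: y vadd_def S_up_def)
  have partial_sums_eq: "(\<Sum>i=a..<k. y!i - p!a) = (\<Sum>i=a..<k. mu!i + xi!i - c)" if "k \<le> b" for k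
    using that \<open>b \<le> n\<close> by (intro sum.cong) (auto simp: y_nth c_def)
  have partial: "0 \<le> (\<Sum>i=a..<k. mu!i + xi!i - c)" if "a < k" "k \<le> b" for k
  proof -
    have const_k: "\<forall>i\<in>{a..<k}. p!i = p!a" using that by (intro ballI bspec[OF const]) auto
    have "k \<le> n" using that \<open>b \<le> n\<close> by simp
    then have "0 \<le> (\<Sum>i=a..<k. y!i - p!a)"
      by (rule is_proj_S_up_prefix_sum_nonneg[OF p \<open>length y = n\<close> \<open>a < k\<close> _ const_k left_max])
    then show ?thesis using partial_sums_eq[OF \<open>k \<le> b\<close>] by simp
  qed
  have "(\<Sum>i=a..<b. mu!i + xi!i - c) = 0"
    using partial[OF \<open>a < b\<close> order.refl] partial_sums_eq[OF order.refl]
      is_proj_S_up_block_sum_nonpos[OF p \<open>length y = n\<close> \<open>a < b\<close> \<open>b \<le> n\<close> const right_max] by simp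
  moreover have "mono_on {a..<b} (\<lambda>i. mu!i)"
    using mu \<open>b \<le> n\<close> by (auto simp: mono_on_def S_up_def sorted_nth_mono)
  ultimately have inner: "(\<Sum>i=a..<b. (c - mu!i)^2) \<le> (\<Sum>i=a..<b. xi!i * (c - mu!i))"
    using block_sum_sq_le_inner[OF \<open>a < b\<close> _ partial] by blast
  define v where "v = map (\<lambda>i. c - mu!i) [a..<b]"
  have "v \<in> S_down (b - a)"
    using mu \<open>b \<le> n\<close> by (auto simp: v_def S_down_def S_up_def sorted_wrt_iff_nth_less sorted_nth_mono)
  moreover have "subvec xi T = map ((!) xi) [a..<b]" by (simp add: subvec_def T_eq)
  moreover have "sq_norm v = (\<Sum>i=a..<b. (c - mu!i)^2)"
    by (simp add: v_def sq_norm_def sum_set_upt_conv_sum_list_nat[symmetric] comp_def)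
  moreover have "sum_list (map2 (*) (map ((!) xi) [a..<b]) v) = (\<Sum>i=a..<b. xi!i * (c - mu!i))"
    by (simp add: v_def zip_map_map zip_same_conv_map sum_set_upt_conv_sum_list_nat[symmetric] comp_def)
  ultimately have "(\<Sum>i=a..<b. (c - mu!i)^2) \<le> sq_norm (proj (S_down (card T)) (subvec xi T))"
    using sq_norm_le_sq_norm_proj_S_down[of "subvec xi T" "b - a" v] inner by (simp add: T_eq)
  moreover have "(\<Sum>i\<in>T. (p!i - mu!i)^2) = (\<Sum>i=a..<b. (c - mu!i)^2)"
    using const unfolding T_eq c_def by (intro sum.cong refl) (metis (no_types, lifting))
  ultimately show ?thesis by simp
qed

theorem mainTheorem6:
  fixes n :: nat and mu xi :: "real list"
  assumes "n \<ge> 1"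
    and "mu \<in> S_up n"
    and "length xi = n"
  shows "sq_norm (vdiff (proj (S_up n) (vadd mu xi)) mu)
     \<le> (\<Sum>T\<in>const_blocks (proj (S_up n) (vadd mu xi)).
           sq_norm (proj (S_down (card T)) (subvec xi T)))"
proof -
  define y where "y = vadd mu xi"
  define p where "p = proj (S_up n) y"
  have "length mu = n" using assms(2) by (simp add: S_up_def)
  then have "length y = n" using assms(3) by (simp add: y_def vadd_def)
  then have p: "is_proj (S_up n) y p" unfolding p_def by (rule is_proj_S_up)
  then have "sorted p" "length p = n" by (auto simp: is_proj_def S_up_def)
  have "sq_norm (vdiff p mu) = (\<Sum>i<n. (p!i - mu!i)^2)"
    using \<open>length p = n\<close> \<open>length mu = n\<close> by (rule sq_norm_vdiff)
  also have "\<dots> = (\<Sum>T\<in>const_blocks p. \<Sum>i\<in>T. (p!i - mu!i)^2)"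
    using sum_over_const_blocks[OF \<open>sorted p\<close>] \<open>length p = n\<close> by simp
  also have "\<dots> \<le> (\<Sum>T\<in>const_blocks p. sq_norm (proj (S_down (card T)) (subvec xi T)))"
    by (intro sum_mono const_block_error_le[OF p \<open>length y = n\<close> assms(2,3) y_def])
  finally show ?thesis by (simp add: p_def y_def)
qed

end
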